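(* Let $p$ be a prime, let $e\geq2$ and $d\geq2$ be integers, let $\lambda\in\{1,\dots,\min(e,d-1)\}$, and let $\alpha=(\alpha_1,\dots,\alpha_d)\in\mathcal R_\lambda(d,e)$ with $\mu=\mu(\alpha)$. Then $$\sum_{i=1}^d p^{\alpha_i}x_i\geq \lambda p^{\mu+1}+(d-\lambda)p^\mu$$ for every $(x_1,\dots,x_d)\in\mathcal P(p^e,d)$, where $\mathcal P(p^e,d)\subset\mathbb R^d$ is the convex hull of all $d$-dimensional vector-factorisations of $p^e$.
   Context: $\mathbb N=\{0,1,2,\dots\}$. A $d$-dimensional vector-factorisation of $N\geq1$ is a vector $(v_1,\dots,v_d)\in\mathbb N^d$ with $v_1\cdots v_d=N$. $\mathcal R_\lambda(d,e)$ is the set of all $\alpha\in\mathbb N^d$ with $\min(\alpha_1,\dots,\alpha_d)=0$, $\max(\alpha_1,\dots,\alpha_d)\,d<e+\sum_i\alpha_i$ and $e+\sum_i\alpha_i\equiv\lambda\pmod d$. For such $\alpha$, $\mu(\alpha)$ is the integer with $\mu(\alpha)d+\lambda=e+\sum_{i=1}^d\alpha_i$. *)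

theory Defs
  imports "HOL-Analysis.Analysis"
begin

text \<open>Dimension d = CARD('n); vectors in R^d are real^'n, index vectors are 'n => nat.\<close>

definition vec_factorisations :: "nat \<Rightarrow> (real^'n) set" where
  "vec_factorisations N = {(\<chi> i. real (v i)) | v :: 'n \<Rightarrow> nat. (\<Prod>i\<in>UNIV. v i) = N}"

definition R_set :: "nat \<Rightarrow> nat \<Rightarrow> ('n::finite \<Rightarrow> nat) set" where
  "R_set lam e = {\<alpha>. (\<exists>i. \<alpha> i = 0)
      \<and> Max (range \<alpha>) * CARD('n) < e + (\<Sum>i\<in>UNIV. \<alpha> i)
      \<and> (e + (\<Sum>i\<in>UNIV. \<alpha> i)) mod CARD('n) = lam mod CARD('n)}"

definition mu :: "nat \<Rightarrow> nat \<Rightarrow> ('n::finite \<Rightarrow> nat) \<Rightarrow> int" where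
  "mu lam e \<alpha> = (int e + (\<Sum>i\<in>UNIV. int (\<alpha> i)) - int lam) div int CARD('n)"

end

theory Submission
  imports Defs "HOL-Computational_Algebra.Primes"
begin

text \<open>Every vector-factorisation of \<open>p^e\<close> is \<open>(p^\<beta>\<^sub>1, \<dots>, p^\<beta>\<^sub>d)\<close> with
  \<open>\<Sum> \<beta>\<^sub>i = e\<close>, on which the linear form takes the value \<open>\<Sum> p^(\<alpha>\<^sub>i + \<beta>\<^sub>i)\<close> with
  \<open>\<Sum> (\<alpha>\<^sub>i + \<beta>\<^sub>i) = \<mu> d + \<lambda>\<close>. Since \<open>k \<mapsto> p^k\<close> is convex, each \<open>p^k\<close> lies above the
  line through \<open>(\<mu>, p^\<mu>)\<close> and \<open>(\<mu>+1, p^(\<mu>+1))\<close>; summing these bounds gives exactly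
  \<open>\<lambda> p^(\<mu>+1) + (d - \<lambda>) p^\<mu>\<close>. A linear lower bound valid at all factorisations
  holds on their convex hull.\<close>

lemma power_ge_tangent:
  fixes p :: real and k m :: nat
  assumes p: "0 \<le> p"
  shows "p ^ m + (real k - real m) * (p ^ Suc m - p ^ m) \<le> p ^ k"
proof (cases "m \<le> k")
  case True
  then obtain j where k: "k = m + j" using le_Suc_ex by blast
  have "p ^ m + (real k - real m) * (p ^ Suc m - p ^ m) = p ^ m * (1 + real j * (p - 1))"
    by (simp add: k algebra_simps)
  also have "\<dots> \<le> p ^ m * p ^ j"
    using Bernoulli_inequality[of "p - 1" j] p by (simp add: mult_left_mono)
  finally show ?thesis by (simp add: k power_add)
next
  case False
  then obtain j where m: "m = k + j" and "0 < j" using le_Suc_ex[of k m] by auto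
  show ?thesis
  proof (cases "p = 0")
    case True
    then have "p ^ m = 0" "p ^ Suc m = 0" using \<open>0 < j\<close> by (simp_all add: m)
    then show ?thesis using p by (metis add_0 diff_self mult_zero_right zero_le_power)
  next
    case False
    with p have p: "0 < p" by simp
    \<comment> \<open>Bernoulli's inequality for \<open>1/p\<close>, combined with \<open>p + 1/p \<ge> 2\<close>\<close>
    have "1 / p - 1 - (1 - p) = (p - 1)\<^sup>2 / p"
      using p by (simp add: field_simps power2_eq_square)
    then have "1 - p \<le> 1 / p - 1"
      using p by (metis diff_ge_0_iff_ge divide_nonneg_pos zero_le_power2)
    then have "real j * (1 - p) \<le> real j * (1 / p - 1)"
      by (simp add: mult_left_mono)
    moreover have "1 + real j * (1 / p - 1) \<le> (1 / p) ^ j"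
      using Bernoulli_inequality[of "1 / p - 1" j] p by simp
    ultimately have "1 - real j * (p - 1) \<le> (1 / p) ^ j"
      by (simp add: algebra_simps)
    then have "p ^ j * (1 - real j * (p - 1)) \<le> p ^ j * (1 / p) ^ j"
      using p by (simp add: mult_left_mono)
    also have "\<dots> = 1"
      using p by (simp add: field_simps)
    finally have "p ^ k * (p ^ j * (1 - real j * (p - 1))) \<le> p ^ k"
      using p by (simp add: mult_left_le)
    moreover have "p ^ m + (real k - real m) * (p ^ Suc m - p ^ m)
        = p ^ k * (p ^ j * (1 - real j * (p - 1)))"
      by (simp add: m power_add algebra_simps)
    ultimately show ?thesis by simp
  qed
qed

lemma sum_power_ge_balanced:
  fixes p :: real and \<gamma> :: "'a \<Rightarrow> nat"
  assumes "0 \<le> p" and "finite A" and "(\<Sum>i\<in>A. \<gamma> i) = m * card A + r"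
  shows "real r * p ^ Suc m + (real (card A) - real r) * p ^ m \<le> (\<Sum>i\<in>A. p ^ \<gamma> i)"
proof -
  have "real r * p ^ Suc m + (real (card A) - real r) * p ^ m
      = (\<Sum>i\<in>A. p ^ m + (real (\<gamma> i) - real m) * (p ^ Suc m - p ^ m))"
    using assms(3)
    by (simp add: sum.distrib sum_subtractf flip: sum_distrib_right of_nat_sum) (simp add: algebra_simps)
  also have "\<dots> \<le> (\<Sum>i\<in>A. p ^ \<gamma> i)"
    by (intro sum_mono power_ge_tangent assms(1))
  finally show ?thesis .
qed

lemma prod_eq_prime_power:
  fixes p e :: nat and v :: "'a \<Rightarrow> nat"
  assumes "prime p" and "finite A" and "(\<Prod>i\<in>A. v i) = p ^ e"
  obtains \<beta> where "\<And>i. i \<in> A \<Longrightarrow> v i = p ^ \<beta> i" and "(\<Sum>i\<in>A. \<beta> i) = e"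
proof -
  have "\<exists>k. v i = p ^ k" if "i \<in> A" for i
  proof -
    have "v i dvd p ^ e" using assms(2,3) that by (metis dvd_prodI)
    then show ?thesis using divides_primepow_nat[OF assms(1)] by blast
  qed
  then obtain \<beta> where \<beta>: "\<And>i. i \<in> A \<Longrightarrow> v i = p ^ \<beta> i" by metis
  have "p ^ (\<Sum>i\<in>A. \<beta> i) = p ^ e"
    using assms(3) by (simp add: power_sum \<beta>)
  then have "(\<Sum>i\<in>A. \<beta> i) = e"
    using prime_gt_1_nat[OF assms(1)] power_inject_exp by blast
  with \<beta> show ?thesis by (rule that)
qed

lemma vec_factorisations_prime_power:
  fixes y :: "real^'n"
  assumes "prime p" and "y \<in> vec_factorisations (p ^ e)"
  obtains \<beta> :: "'n \<Rightarrow> nat" where "y = (\<chi> i. real p ^ \<beta> i)" and "(\<Sum>i\<in>UNIV. \<beta> i) = e"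
proof -
  obtain v :: "'n \<Rightarrow> nat" where y: "y = (\<chi> i. real (v i))" and "(\<Prod>i\<in>UNIV. v i) = p ^ e"
    using assms(2) unfolding vec_factorisations_def by blast
  then obtain \<beta> where "\<And>i. v i = p ^ \<beta> i" and "(\<Sum>i\<in>UNIV. \<beta> i) = e"
    using prod_eq_prime_power[OF assms(1) finite] by (metis UNIV_I)
  with y show ?thesis by (intro that) simp_all
qed

lemma R_set_mu:
  fixes \<alpha> :: "'n::finite \<Rightarrow> nat"
  assumes "\<alpha> \<in> R_set lam e" and "lam < CARD('n)"
  obtains m where "e + (\<Sum>i\<in>UNIV. \<alpha> i) = m * CARD('n) + lam" and "mu lam e \<alpha> = int m"
proof
  define S where "S = e + (\<Sum>i\<in>UNIV. \<alpha> i)"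
  have "S mod CARD('n) = lam"
    using assms unfolding R_set_def S_def by simp
  then show S: "e + (\<Sum>i\<in>UNIV. \<alpha> i) = S div CARD('n) * CARD('n) + lam"
    unfolding S_def by (metis div_mult_mod_eq)
  have "mu lam e \<alpha> = (int S - int lam) div int CARD('n)"
    unfolding mu_def S_def by (simp add: of_nat_sum)
  also have "int S - int lam = int (S div CARD('n)) * int CARD('n)"
    using S unfolding S_def[symmetric] by (metis add_diff_cancel_right' of_nat_add of_nat_mult)
  also have "\<dots> div int CARD('n) = int (S div CARD('n))"
    by simp
  finally show "mu lam e \<alpha> = int (S div CARD('n))" .
qed

lemma convex_hull_inner_ge:
  fixes c :: "'a::real_inner"
  assumes "\<And>y. y \<in> S \<Longrightarrow> b \<le> inner c y" and "x \<in> convex hull S"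
  shows "b \<le> inner c x"
proof -
  have "convex hull S \<subseteq> {y. b \<le> inner c y}"
    using assms(1) convex_halfspace_ge[of b c] by (intro hull_minimal) auto
  with assms(2) show ?thesis by blast
qed

theorem proposition3p1:
  fixes p e lam :: nat and \<alpha> :: "'n::finite \<Rightarrow> nat" and x :: "real^'n"
  assumes "prime p" and "e \<ge> 2" and "CARD('n) \<ge> 2"
    and "1 \<le> lam" and "lam \<le> min e (CARD('n) - 1)"
    and "\<alpha> \<in> R_set lam e"
    and "x \<in> convex hull (vec_factorisations (p ^ e))"
  shows "(\<Sum>i\<in>UNIV. real p ^ \<alpha> i * x $ i)
    \<ge> real lam * real p ^ nat (mu lam e \<alpha> + 1)
       + real (CARD('n) - lam) * real p ^ nat (mu lam e \<alpha>)"
proof -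
  have lam: "lam < CARD('n)" using assms(3,5) by linarith
  then obtain m where S: "e + (\<Sum>i\<in>UNIV. \<alpha> i) = m * CARD('n) + lam" and mu: "mu lam e \<alpha> = int m"
    using assms(6) R_set_mu by blast
  define c :: "real^'n" where "c = (\<chi> i. real p ^ \<alpha> i)"
  define b where "b = real lam * real p ^ Suc m + (real CARD('n) - real lam) * real p ^ m"
  have "b \<le> inner c y" if y: "y \<in> vec_factorisations (p ^ e)" for y
  proof -
    obtain \<beta> where y_eq: "y = (\<chi> i. real p ^ \<beta> i)" and "(\<Sum>i\<in>UNIV. \<beta> i) = e"
      using vec_factorisations_prime_power[OF assms(1) y] .
    then have "(\<Sum>i\<in>UNIV. \<alpha> i + \<beta> i) = m * card (UNIV :: 'n set) + lam"
      using S by (simp add: sum.distrib)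
    then have "b \<le> (\<Sum>i\<in>UNIV. real p ^ (\<alpha> i + \<beta> i))"
      unfolding b_def by (intro sum_power_ge_balanced) simp_all
    then show ?thesis by (simp add: c_def y_eq inner_vec_def power_add)
  qed
  then have "b \<le> inner c x" using assms(7) by (rule convex_hull_inner_ge)
  then show ?thesis
    using lam by (simp add: b_def c_def mu inner_vec_def of_nat_diff nat_add_distrib)
qed

end
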